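(* Let $f\in C_u(\mathbb{R})$ and let $H=-\frac{d^2}{dx^2}+x^2$ be the harmonic oscillator on $L^2(\mathbb{R})$. Then there is an entire function $\rho$ on $\mathbb{C}$ such that for $\mathrm{Re}(s)>1$, \[\Gamma(s)\,\mathrm{Tr}(fH^{-s})=\frac{1}{2\sqrt{\pi}}\int_0^1\int_{\mathbb{R}} t^{s-1}\,\mathrm{cosech}\,t\; f\big(x\sqrt{\coth t}\big)\,e^{-x^2}\,dx\,dt+\rho(s).\]
   Context: $C_u(\mathbb{R})$ denotes bounded uniformly continuous functions on $\mathbb{R}$, acting on $L^2(\mathbb{R})$ by multiplication. $H$ is the self-adjoint harmonic oscillator, with eigenvalues $1,3,5,\dots$; $fH^{-s}$ is trace class for $\mathrm{Re}(s)>1$. *)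

theory Defs
  imports "HOL-Analysis.Analysis" "HOL-Complex_Analysis.Complex_Analysis"
begin

fun hermite_poly :: "nat \<Rightarrow> real \<Rightarrow> real" where
  "hermite_poly 0 x = 1"
| "hermite_poly (Suc 0) x = 2 * x"
| "hermite_poly (Suc (Suc n)) x = 2 * x * hermite_poly (Suc n) x - 2 * real (Suc n) * hermite_poly n x"

text \<open>Normalised Hermite functions: the orthonormal eigenbasis of the harmonic oscillator
  H = -d^2/dx^2 + x^2 on L^2(R), with H h_n = (2n+1) h_n.\<close>
definition hermite_fun :: "nat \<Rightarrow> real \<Rightarrow> real" where
  "hermite_fun n x = hermite_poly n x * exp (- (x^2) / 2) / sqrt (2 ^ n * fact n * sqrt pi)"

text \<open>Tr(f H^(-s)) computed in the orthonormal eigenbasis (h_n) of H: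
  the sum over n of <f H^(-s) h_n, h_n> = (2n+1)^(-s) * integral of f(x) h_n(x)^2 dx.\<close>
definition osc_trace :: "(real \<Rightarrow> complex) \<Rightarrow> complex \<Rightarrow> complex" where
  "osc_trace f s = (\<Sum>n. (of_nat (2 * n + 1)) powr (- s) *
      (LINT x|lborel. f x * complex_of_real ((hermite_fun n x)^2)))"

end

(*
  Expanding in the Hermite functions h_n, Gamma(s) Tr(f H^-s) = sum_n Gamma(s) (2n+1)^-s c_n with
  c_n = integral f h_n^2.  Since Gamma(s) a^-s is the Mellin transform of e^-at, this is the Mellin
  transform of the heat trace Theta(t) = sum_n c_n e^-(2n+1)t = Tr(f e^-tH); the interchange of sum
  and integral is justified by |c_n| <= sup |f|, the h_n being normalised.

  Mehler's formula on the diagonal, sum_n h_n(x)^2 r^n = exp(-x^2 (1-r)/(1+r)) / sqrt(pi (1-r^2)),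
  follows from a first-order ODE satisfied by the generating function of H_n(x)^2 / (2^n n!).
  Integrating it against f and substituting x -> x sqrt(coth t) with r = e^-2t gives
  Theta(t) = (2 sqrt pi sinh t)^-1 integral f(x sqrt(coth t)) e^-x^2 dx.  Integrating it against 1
  and comparing coefficients with 1/(1-r) = sum_n r^n gives the normalisation of the h_n.

  The Mellin integral over (0,1) is the integral in the statement, and the one over [1,oo) is
  entire in s because Theta(t) = O(e^-t).
*)
theory Submission
  imports Defs "HOL-Probability.Probability" "HOL-Computational_Algebra.Polynomial_FPS"
begin

definition hermite_sq :: "nat \<Rightarrow> real \<Rightarrow> real" where
  "hermite_sq n x = (hermite_poly n x)^2 / (2^n * fact n)"

(* The cross term closes the recurrence for hermite_sq into a first-order system. *)
definition hermite_cross :: "nat \<Rightarrow> real \<Rightarrow> real" where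
  "hermite_cross n x =
     (if n = 0 then 0 else hermite_poly n x * hermite_poly (n-1) x / (2^(n-1) * fact (n-1)))"

lemma hermite_sq_0 [simp]: "hermite_sq 0 x = 1"
  by (simp add: hermite_sq_def)

lemma hermite_sq_1: "hermite_sq (Suc 0) x = 2 * x^2"
  by (simp add: hermite_sq_def power2_eq_square)

lemma hermite_sq_nonneg: "hermite_sq n x \<ge> 0"
  by (simp add: hermite_sq_def)

lemma hermite_cross_Suc: "hermite_cross (Suc n) x = 2 * x * hermite_sq n x - hermite_cross n x"
proof (cases n)
  case 0
  then show ?thesis by (simp add: hermite_cross_def hermite_sq_def)
next
  case (Suc m)
  define a where "a = hermite_poly (Suc m) x"
  define b where "b = hermite_poly m x"
  have fact_Suc: "(fact (Suc m) :: real) = real (Suc m) * fact m" by simp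
  have "(fact m :: real) > 0" by simp
  moreover have "hermite_poly (Suc (Suc m)) x = 2 * x * a - 2 * real (Suc m) * b"
    by (simp add: a_def b_def)
  ultimately show ?thesis
    unfolding Suc hermite_cross_def hermite_sq_def
    by (simp only: a_def[symmetric] b_def[symmetric] diff_Suc_1 fact_Suc power_Suc)
       (simp add: field_simps power2_eq_square del: of_nat_Suc)
qed

lemma hermite_sq_Suc_Suc:
  "real (Suc (Suc m)) * hermite_sq (Suc (Suc m)) x =
     2 * x^2 * hermite_sq (Suc m) x - 2 * x * hermite_cross (Suc m) x + real (Suc m) * hermite_sq m x"
proof -
  define a where "a = hermite_poly (Suc m) x"
  define b where "b = hermite_poly m x"
  have fact_SS: "(fact (Suc (Suc m)) :: real) = real (Suc (Suc m)) * (real (Suc m) * fact m)"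
    by simp
  have fact_Suc: "(fact (Suc m) :: real) = real (Suc m) * fact m" by simp
  have "(fact m :: real) > 0" by simp
  moreover have "hermite_poly (Suc (Suc m)) x = 2 * x * a - 2 * real (Suc m) * b"
    by (simp add: a_def b_def)
  ultimately show ?thesis
    unfolding hermite_cross_def hermite_sq_def
    by (simp only: a_def[symmetric] b_def[symmetric] diff_Suc_1 fact_SS fact_Suc power_Suc)
       (simp add: field_simps power2_eq_square del: of_nat_Suc)
qed

lemma hermite_cross_Suc_sq:
  "(hermite_cross (Suc n) x)^2 = 2 * real (Suc n) * hermite_sq (Suc n) x * hermite_sq n x"
proof -
  have fact_Suc: "(fact (Suc n) :: real) = real (Suc n) * fact n" by simp
  have "(fact n :: real) > 0" by simp
  then show ?thesis
    unfolding hermite_cross_def hermite_sq_def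
    by (simp only: fact_Suc power_Suc diff_Suc_1 if_False nat.distinct)
       (simp add: field_simps power2_eq_square del: of_nat_Suc)
qed

lemma hermite_sq_recurrence:
  "real (m+2) * hermite_sq (m+2) x =
     (2*x^2 - real m - 1) * hermite_sq (m+1) x + (real m + 1 - 2*x^2) * hermite_sq m x
     + real m * hermite_sq (m-1) x"
proof (cases m)
  case 0
  have "hermite_cross (Suc 0) x = 2 * x"
    using hermite_cross_Suc[of 0 x] by (simp add: hermite_cross_def)
  then show ?thesis
    using hermite_sq_Suc_Suc[of 0 x] 0 by (simp add: hermite_sq_1 algebra_simps power2_eq_square)
next
  case (Suc k)
  then show ?thesis
    using hermite_sq_Suc_Suc[of "Suc k" x] hermite_cross_Suc[of "Suc k" x] hermite_sq_Suc_Suc[of k x]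
    by (simp add: algebra_simps power2_eq_square)
qed

lemma abs_hermite_cross_le:
  assumes "\<delta> > 0"
  shows "\<bar>2 * x * hermite_cross (Suc m) x\<bar>
           \<le> \<delta> * real (Suc m) * hermite_sq m x + (2 * x^2 / \<delta>) * hermite_sq (Suc m) x"
proof -
  define a where "a = \<delta> * real (Suc m) * hermite_sq m x"
  define b where "b = (2 * x^2 / \<delta>) * hermite_sq (Suc m) x"
  have "a \<ge> 0" "b \<ge> 0"
    using assms hermite_sq_nonneg[of m x] hermite_sq_nonneg[of "Suc m" x] by (simp_all add: a_def b_def)
  have "(2 * x * hermite_cross (Suc m) x)^2 = 4 * a * b"
    using assms hermite_cross_Suc_sq[of m x]
    by (simp add: power_mult_distrib a_def b_def field_simps power2_eq_square del: of_nat_Suc)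
  also have "\<dots> \<le> (a + b)^2"
    using sum_squares_ge_zero[of "a - b" 0] by (simp add: power2_eq_square algebra_simps)
  finally have "\<bar>2 * x * hermite_cross (Suc m) x\<bar> \<le> \<bar>a + b\<bar>"
    by (simp add: abs_le_square_iff)
  with \<open>a \<ge> 0\<close> \<open>b \<ge> 0\<close> show ?thesis by (simp add: a_def b_def)
qed

lemma hermite_sq_le_max:
  assumes "\<delta> > 0" and "2 * x^2 * (1 + 1/\<delta>) \<le> \<delta> * real (m+2)"
  shows "hermite_sq (m+2) x \<le> (1 + 2*\<delta>) * max (hermite_sq (m+1) x) (hermite_sq m x)"
proof -
  define A where "A = 2 * x^2 * (1 + 1/\<delta>)"
  have nonneg: "hermite_sq m x \<ge> 0" "hermite_sq (m+1) x \<ge> 0"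
    by (simp_all add: hermite_sq_nonneg)
  have "real (m+2) * hermite_sq (m+2) x \<le> A * hermite_sq (m+1) x + (1+\<delta>) * real (m+1) * hermite_sq m x"
    using hermite_sq_Suc_Suc[of m x] abs_hermite_cross_le[OF assms(1), of x m] assms(1)
    by (simp add: A_def algebra_simps abs_le_iff)
  also have "\<dots> \<le> A * hermite_sq (m+1) x + (1+\<delta>) * real (m+2) * hermite_sq m x"
    using assms(1) nonneg by (intro add_left_mono mult_right_mono mult_left_mono) auto
  also have "A * hermite_sq (m+1) x \<le> \<delta> * real (m+2) * hermite_sq (m+1) x"
    using assms(2) nonneg by (intro mult_right_mono) (auto simp: A_def)
  finally have "real (m+2) * hermite_sq (m+2) x
                  \<le> real (m+2) * (\<delta> * hermite_sq (m+1) x + (1+\<delta>) * hermite_sq m x)"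
    by (simp add: algebra_simps)
  then have "hermite_sq (m+2) x \<le> \<delta> * hermite_sq (m+1) x + (1+\<delta>) * hermite_sq m x"
    by (subst (asm) mult_le_cancel_left_pos) auto
  also have "\<dots> \<le> \<delta> * max (hermite_sq (m+1) x) (hermite_sq m x)
                 + (1+\<delta>) * max (hermite_sq (m+1) x) (hermite_sq m x)"
    using assms(1) by (intro add_mono mult_left_mono) auto
  finally show ?thesis by (simp add: algebra_simps)
qed

lemma two_step_geometric_bound:
  fixes a :: "nat \<Rightarrow> real"
  assumes "\<gamma> \<ge> 1" and nonneg: "\<And>n. a n \<ge> 0"
    and step: "\<And>m. m \<ge> N \<Longrightarrow> a (m+2) \<le> \<gamma> * max (a (m+1)) (a m)"
  obtains K where "\<And>n. n \<ge> N \<Longrightarrow> a n \<le> K * \<gamma>^n"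
proof
  define K where "K = max (a N / \<gamma>^N) (a (N+1) / \<gamma>^(N+1))"
  have pos: "\<gamma>^n > 0" for n using assms(1) by simp
  have "K \<ge> 0" using pos[of N] nonneg[of N] by (simp add: K_def le_max_iff_disj)
  have bound: "a (N+k) \<le> K * \<gamma>^(N+k) \<and> a (N+k+1) \<le> K * \<gamma>^(N+k+1)" for k
  proof (induction k)
    case 0
    have "a N / \<gamma>^N \<le> K" "a (N+1) / \<gamma>^(N+1) \<le> K" by (simp_all add: K_def)
    then show ?case using pos[of N] pos[of "N+1"] by (simp add: pos_divide_le_eq del: power_Suc)
  next
    case (Suc k)
    have "a (N+k+2) \<le> \<gamma> * max (a (N+k+1)) (a (N+k))" using step[of "N+k"] by simp
    also have "\<dots> \<le> \<gamma> * max (K * \<gamma>^(N+k+1)) (K * \<gamma>^(N+k))"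
      using Suc.IH assms(1) by (intro mult_left_mono max.mono) auto
    also have "max (K * \<gamma>^(N+k+1)) (K * \<gamma>^(N+k)) = K * \<gamma>^(N+k+1)"
      using \<open>K \<ge> 0\<close> assms(1) by (intro max_absorb1 mult_left_mono) (auto intro: power_increasing)
    finally show ?case using Suc.IH by (simp add: algebra_simps)
  qed
  show "a n \<le> K * \<gamma>^n" if "n \<ge> N" for n
    using bound[of "n - N"] that by simp
qed

(* Once n is large compared with x^2, the recurrence lets hermite_sq n x grow at most like
  (1 + 2 delta)^n, and delta is chosen so that (1 + 2 delta) r < 1. *)
lemma summable_hermite_sq_powser:
  assumes "0 \<le> r" "r < 1"
  shows "summable (\<lambda>n. hermite_sq n x * r^n)"
proof -
  define \<delta> where "\<delta> = (1-r) / (2*(1+r))"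
  define \<gamma> where "\<gamma> = 1 + 2*\<delta>"
  have "\<delta> > 0" "\<gamma> \<ge> 1" "\<gamma> * r < 1"
    using assms by (simp_all add: \<gamma>_def \<delta>_def field_simps)
  obtain N :: nat where N: "2 * x^2 * (1 + 1/\<delta>) / \<delta> \<le> real N"
    using real_arch_simple by blast
  have "hermite_sq (m+2) x \<le> \<gamma> * max (hermite_sq (m+1) x) (hermite_sq m x)" if "m \<ge> N" for m
  proof (unfold \<gamma>_def, rule hermite_sq_le_max[OF \<open>\<delta> > 0\<close>])
    have "2 * x^2 * (1 + 1/\<delta>) \<le> \<delta> * real N" using N \<open>\<delta> > 0\<close> by (simp add: field_simps)
    also have "\<dots> \<le> \<delta> * real (m+2)" using that \<open>\<delta> > 0\<close> by (intro mult_left_mono) auto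
    finally show "2 * x^2 * (1 + 1/\<delta>) \<le> \<delta> * real (m+2)" .
  qed
  then obtain K where K: "\<And>n. n \<ge> N \<Longrightarrow> hermite_sq n x \<le> K * \<gamma>^n"
    using two_step_geometric_bound[of \<gamma> "\<lambda>n. hermite_sq n x" N] \<open>\<gamma> \<ge> 1\<close> hermite_sq_nonneg
    by blast
  show ?thesis
  proof (rule summable_comparison_test_ev)
    show "\<forall>\<^sub>F n in sequentially. norm (hermite_sq n x * r^n) \<le> K * (\<gamma>*r)^n"
      using eventually_ge_at_top[of N]
      by eventually_elim
         (use assms K hermite_sq_nonneg in
           \<open>auto simp: power_mult_distrib mult.assoc[symmetric] intro!: mult_right_mono\<close>)
    show "summable (\<lambda>n. K * (\<gamma>*r)^n)"
      using assms \<open>\<gamma> \<ge> 1\<close> \<open>\<gamma> * r < 1\<close> by (intro summable_mult summable_geometric) simp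
  qed
qed

lemma ereal_norm_less_fps_conv_radius:
  assumes "fps_conv_radius F \<ge> 1" and "norm z < 1"
  shows "ereal (norm z) < fps_conv_radius F"
proof -
  have "ereal (norm z) < 1" using assms(2) by simp
  then show ?thesis using assms(1) by (rule order.strict_trans2)
qed

definition hermite_sq_fps :: "real \<Rightarrow> real fps" where
  "hermite_sq_fps x = Abs_fps (\<lambda>n. hermite_sq n x)"

lemma fps_conv_radius_hermite_sq_fps: "fps_conv_radius (hermite_sq_fps x) \<ge> 1"
  unfolding fps_conv_radius_def hermite_sq_fps_def fps_nth_Abs_fps
  by (intro conv_radius_geI_ex') (auto intro!: summable_hermite_sq_powser)

lemma hermite_sq_fps_ode:
  "fps_of_poly [:1, 1, -1, -1:] * fps_deriv (hermite_sq_fps x)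
     = fps_of_poly [:2*x^2, 1 - 2*x^2, 1:] * hermite_sq_fps x"
proof -
  let ?U = "hermite_sq_fps x"
  have coeff: "(fps_deriv ?U + fps_X * fps_deriv ?U - fps_X^2 * fps_deriv ?U - fps_X^3 * fps_deriv ?U) $ n
     = (fps_const (2*x^2) * ?U + fps_const (1 - 2*x^2) * (fps_X * ?U) + fps_X^2 * ?U) $ n" for n
  proof -
    have "n = 0 \<or> n = 1 \<or> n = 2 \<or> (\<exists>m. n = m + 3)" by presburger
    then consider "n = 0" | "n = 1" | "n = 2" | m where "n = m + 3" by blast
    then show ?thesis
    proof cases
      case 1
      then show ?thesis by (simp add: hermite_sq_fps_def fps_X_power_mult_nth hermite_sq_1)
    next
      case 2
      then show ?thesis using hermite_sq_recurrence[of 0 x]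
        by (simp add: hermite_sq_fps_def fps_X_power_mult_nth hermite_sq_1 numeral_2_eq_2 algebra_simps)
    next
      case 3
      then show ?thesis using hermite_sq_recurrence[of 1 x]
        by (simp add: hermite_sq_fps_def fps_X_power_mult_nth hermite_sq_1 numeral_2_eq_2
            numeral_3_eq_3 algebra_simps)
    next
      case (4 m)
      then show ?thesis using hermite_sq_recurrence[of "m+2" x]
        by (simp add: hermite_sq_fps_def fps_X_power_mult_nth algebra_simps numeral_2_eq_2 numeral_3_eq_3)
    qed
  qed
  have "fps_of_poly [:1, 1, -1, -1:] * fps_deriv ?U
      = fps_deriv ?U + fps_X * fps_deriv ?U - fps_X^2 * fps_deriv ?U - fps_X^3 * fps_deriv ?U"
    by (simp add: fps_of_poly_pCons algebra_simps power2_eq_square power3_eq_cube fps_const_neg[symmetric])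
  also have "\<dots> = fps_const (2*x^2) * ?U + fps_const (1 - 2*x^2) * (fps_X * ?U) + fps_X^2 * ?U"
    by (rule fps_ext, rule coeff)
  also have "\<dots> = fps_of_poly [:2*x^2, 1 - 2*x^2, 1:] * ?U"
    by (simp add: fps_of_poly_pCons algebra_simps power2_eq_square)
  finally show ?thesis .
qed

lemma eval_hermite_sq_fps_ode:
  assumes "\<bar>r\<bar> < 1"
  shows "(1 + r - r^2 - r^3) * eval_fps (fps_deriv (hermite_sq_fps x)) r
           = (2*x^2 + (1 - 2*x^2)*r + r^2) * eval_fps (hermite_sq_fps x) r"
proof -
  have radius: "ereal (norm r) < fps_conv_radius (hermite_sq_fps x)"
    using assms by (intro ereal_norm_less_fps_conv_radius fps_conv_radius_hermite_sq_fps) simp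
  moreover have "ereal (norm r) < fps_conv_radius (fps_deriv (hermite_sq_fps x))"
    using radius fps_conv_radius_deriv[of "hermite_sq_fps x"] by (rule order.strict_trans2)
  moreover have "eval_fps (fps_of_poly [:1, 1, -1, -1:] * fps_deriv (hermite_sq_fps x)) r
      = eval_fps (fps_of_poly [:2*x^2, 1 - 2*x^2, 1:] * hermite_sq_fps x) r"
    by (simp only: hermite_sq_fps_ode)
  ultimately have "poly [:1, 1, -1, -1:] r * eval_fps (fps_deriv (hermite_sq_fps x)) r
      = poly [:2*x^2, 1 - 2*x^2, 1:] r * eval_fps (hermite_sq_fps x) r"
    by (subst (asm) (1 2) eval_fps_mult) auto
  then show ?thesis by (simp add: algebra_simps power2_eq_square power3_eq_cube)
qed

lemma has_field_derivative_hermite_sq_fps_invariant: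
  assumes "\<bar>y\<bar> < 1"
  shows "((\<lambda>r. (eval_fps (hermite_sq_fps x) r)^2 * (1 - r^2) * exp (-4*x^2*r/(1+r)))
           has_field_derivative 0) (at y)"
proof -
  define U where "U = eval_fps (hermite_sq_fps x)"
  define D where "D = eval_fps (fps_deriv (hermite_sq_fps x)) y"
  have "1 + y > 0" using assms by simp
  have dU: "(U has_field_derivative D) (at y)"
    unfolding U_def D_def using assms
    by (intro has_field_derivative_eval_fps ereal_norm_less_fps_conv_radius fps_conv_radius_hermite_sq_fps) simp
  have ode: "(1 + y - y^2 - y^3) * D = (2*x^2 + (1 - 2*x^2)*y + y^2) * U y"
    using eval_hermite_sq_fps_ode[OF assms, of x] by (simp add: D_def U_def)
  have dE: "((\<lambda>r. exp (-4*x^2*r/(1+r))) has_field_derivative exp (-4*x^2*y/(1+y)) * (-4*x^2/(1+y)^2)) (at y)"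
    using \<open>1 + y > 0\<close> by (auto intro!: derivative_eq_intros simp: field_simps power2_eq_square)
  have d2: "((\<lambda>r. U r ^ 2 * (1 - r^2)) has_field_derivative 2*U y*D*(1-y^2) - U y^2 * (2*y)) (at y)"
    by (auto intro!: derivative_eq_intros dU simp: power2_eq_square algebra_simps)
  have "((\<lambda>r. U r ^ 2 * (1 - r^2) * exp (-4*x^2*r/(1+r))) has_field_derivative
      (2*U y*D*(1-y^2) - U y^2 * (2*y)) * exp (-4*x^2*y/(1+y))
      + exp (-4*x^2*y/(1+y)) * (-4*x^2/(1+y)^2) * (U y^2 * (1-y^2))) (at y)"
    by (rule DERIV_mult[OF d2 dE])
  also have "(2*U y*D*(1-y^2) - U y^2 * (2*y)) * exp (-4*x^2*y/(1+y))
      + exp (-4*x^2*y/(1+y)) * (-4*x^2/(1+y)^2) * (U y^2 * (1-y^2))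
      = exp (-4*x^2*y/(1+y)) * U y
        * (2 * ((1 + y - y^2 - y^3) * D) - 2*y*(1+y) * U y - 4*x^2*(1-y) * U y) / (1+y)"
    using \<open>1 + y > 0\<close> by (simp add: field_simps) (simp add: algebra_simps power2_eq_square power3_eq_cube)
  also have "\<dots> = 0"
    unfolding ode by (simp add: algebra_simps power2_eq_square)
  finally show ?thesis unfolding U_def .
qed

lemma eval_hermite_sq_fps_squared:
  assumes "\<bar>r\<bar> < 1"
  shows "(eval_fps (hermite_sq_fps x) r)^2 * (1 - r^2) * exp (-4*x^2*r/(1+r)) = 1"
proof -
  define W where "W = (\<lambda>r. (eval_fps (hermite_sq_fps x) r)^2 * (1 - r^2) * exp (-4*x^2*r/(1+r)))"
  have "\<exists>c. \<forall>y\<in>{-1<..<1}. W y = c"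
  proof (rule has_field_derivative_zero_constant)
    fix y :: real
    assume "y \<in> {-1<..<1}"
    then have "(W has_field_derivative 0) (at y)"
      unfolding W_def by (intro has_field_derivative_hermite_sq_fps_invariant) auto
    then show "(W has_field_derivative 0) (at y within {-1<..<1})"
      by (rule has_field_derivative_at_within)
  qed simp
  then obtain c where c: "\<And>y. y \<in> {-1<..<1} \<Longrightarrow> W y = c" by blast
  have "W 0 = 1" by (simp add: W_def eval_fps_at_0 hermite_sq_fps_def)
  then have "W r = 1" using c[of r] c[of 0] assms by (auto simp: abs_less_iff)
  then show ?thesis by (simp add: W_def)
qed

lemma mehler_diagonal_sums:
  assumes "0 \<le> r" "r < 1"
  shows "(\<lambda>n. hermite_sq n x * r^n) sums (exp (2*x^2*r/(1+r)) / sqrt (1 - r^2))"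
proof -
  have "(\<lambda>n. hermite_sq n x * r^n) sums eval_fps (hermite_sq_fps x) r"
    using sums_eval_fps[OF ereal_norm_less_fps_conv_radius[OF fps_conv_radius_hermite_sq_fps]] assms
    by (simp add: hermite_sq_fps_def)
  moreover have "eval_fps (hermite_sq_fps x) r \<ge> 0"
    unfolding eval_fps_def hermite_sq_fps_def fps_nth_Abs_fps
    using assms by (intro suminf_nonneg summable_hermite_sq_powser mult_nonneg_nonneg hermite_sq_nonneg) auto
  moreover have "1 - r^2 > 0"
    using assms power_strict_mono[of r 1 2] by simp
  moreover have "(eval_fps (hermite_sq_fps x) r)^2 = (exp (2*x^2*r/(1+r)) / sqrt (1 - r^2))^2"
    using eval_hermite_sq_fps_squared[of r x] assms \<open>1 - r^2 > 0\<close>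
    by (simp add: field_simps exp_minus power_divide exp_double[symmetric])
  ultimately show ?thesis by (simp add: power2_eq_iff_nonneg)
qed

lemma continuous_on_hermite_poly: "continuous_on UNIV (hermite_poly n)"
proof (induction n rule: induct_nat_012)
  case (ge2 n)
  have "hermite_poly (Suc (Suc n)) = (\<lambda>x. 2*x * hermite_poly (Suc n) x - 2 * real (Suc n) * hermite_poly n x)"
    by (rule ext) simp
  then show ?case using ge2 by (auto intro!: continuous_intros)
qed (auto simp: fun_eq_iff intro!: continuous_intros)

lemma continuous_on_hermite_fun: "continuous_on UNIV (hermite_fun n)"
  unfolding hermite_fun_def[abs_def]
  by (intro continuous_intros continuous_on_compose2[OF continuous_on_hermite_poly]) auto

lemma borel_measurable_hermite_fun [measurable]: "hermite_fun n \<in> borel_measurable borel"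
  by (rule borel_measurable_continuous_onI[OF continuous_on_hermite_fun])

lemma hermite_fun_sq: "(hermite_fun n x)^2 = hermite_sq n x * exp (-(x^2)) / sqrt pi"
proof -
  have "(exp (-(x^2/2)))^2 = exp (-(x^2))" by (simp add: exp_double[symmetric])
  then show ?thesis
    unfolding hermite_fun_def hermite_sq_def by (simp add: power_divide power_mult_distrib real_sqrt_mult)
qed

lemma has_bochner_integral_gaussian:
  assumes "a > (0::real)"
  shows "has_bochner_integral lborel (\<lambda>x. exp (-a * x^2)) (sqrt (pi/a))"
proof -
  define \<sigma> where "\<sigma> = sqrt (1/(2*a))"
  have "\<sigma> > 0" and \<sigma>_sq: "2 * \<sigma>^2 = 1/a" using assms by (simp_all add: \<sigma>_def)
  have "exp (-a * x^2) = sqrt (pi/a) * normal_density 0 \<sigma> x" for x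
  proof -
    have "2 * pi * \<sigma>^2 = pi * (2 * \<sigma>^2)" by simp
    also have "\<dots> = pi / a" by (simp add: \<sigma>_sq)
    finally have "2 * pi * \<sigma>^2 = pi / a" .
    moreover have "x^2 / (2 * \<sigma>^2) = a * x^2" by (simp add: \<sigma>_sq)
    ultimately show ?thesis using assms unfolding normal_density_def by simp
  qed
  then show ?thesis
    using \<open>\<sigma> > 0\<close> by (simp add: has_bochner_integral_iff)
qed

lemma sums_integral_bounded_mult:
  fixes g :: "'a \<Rightarrow> 'b::{real_normed_field, banach, second_countable_topology}"
  assumes [measurable]: "g \<in> borel_measurable M" and g_le: "\<And>x. norm (g x) \<le> B"
    and [measurable]: "\<And>n. h n \<in> borel_measurable M" and h_nonneg: "\<And>n x. h n x \<ge> 0"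
    and h_sums: "\<And>x. (\<lambda>n. h n x) sums S x" and "integrable M S"
  shows "(\<lambda>n. LINT x|M. g x * of_real (h n x)) sums (LINT x|M. g x * of_real (S x))"
proof -
  have "B \<ge> 0" using g_le norm_ge_zero order_trans by blast
  have partial_le: "(\<Sum>n<N. h n x) \<le> S x" for N x
    using h_sums[of x] h_nonneg sum_le_suminf[of "\<lambda>n. h n x" "{..<N}"] by (auto simp: sums_iff)
  have norm_partial_le: "norm (g x * of_real (\<Sum>n<N. h n x)) \<le> B * S x" for N x
  proof -
    have "norm (g x * of_real (\<Sum>n<N. h n x)) = norm (g x) * (\<Sum>n<N. h n x)"
      using h_nonneg by (simp only: norm_mult norm_of_real) (simp add: sum_nonneg)
    also have "\<dots> \<le> B * S x"
      using g_le partial_le h_nonneg \<open>B \<ge> 0\<close> by (intro mult_mono) (auto simp: sum_nonneg)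
    finally show ?thesis .
  qed
  have integrable_partial: "integrable M (\<lambda>x. g x * of_real (\<Sum>n<N. h n x))" for N
  proof (rule Bochner_Integration.integrable_bound[where f="\<lambda>x. B * S x"])
    show "AE x in M. norm (g x * of_real (\<Sum>n<N. h n x)) \<le> norm (B * S x)"
      using norm_partial_le by (intro AE_I2) (metis abs_ge_self order_trans real_norm_def)
  qed (use \<open>integrable M S\<close> in simp_all)
  have "(\<lambda>N. LINT x|M. g x * of_real (\<Sum>n<N. h n x)) \<longlonglongrightarrow> (LINT x|M. g x * of_real (S x))"
  proof (rule integral_dominated_convergence[where w="\<lambda>x. B * S x"])
    show "AE x in M. (\<lambda>N. g x * of_real (\<Sum>n<N. h n x)) \<longlonglongrightarrow> g x * of_real (S x)"
      using h_sums by (intro AE_I2 tendsto_mult_left tendsto_of_real) (simp add: sums_def)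
    show "AE x in M. norm (g x * of_real (\<Sum>n<N. h n x)) \<le> B * S x" for N
      using norm_partial_le by (intro AE_I2)
  qed (use \<open>integrable M S\<close> in simp_all)
  moreover have "(LINT x|M. g x * of_real (\<Sum>n<N. h n x)) = (\<Sum>n<N. LINT x|M. g x * of_real (h n x))" for N
  proof -
    have "integrable M (\<lambda>x. g x * of_real (h n x))" for n
      using Bochner_Integration.integrable_diff[OF integrable_partial[of "Suc n"] integrable_partial[of n]]
      by (simp add: algebra_simps)
    then show ?thesis by (simp add: sum_distrib_left)
  qed
  ultimately show ?thesis by (simp add: sums_def)
qed

definition mehler_kernel :: "real \<Rightarrow> real \<Rightarrow> real" where
  "mehler_kernel r x = exp (-(x^2) * ((1-r)/(1+r))) / (sqrt pi * sqrt (1 - r^2))"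

lemma hermite_fun_sq_sums:
  assumes "0 \<le> r" "r < 1"
  shows "(\<lambda>n. (hermite_fun n x)^2 * r^n) sums mehler_kernel r x"
proof -
  have "-(x^2) + 2*x^2*r/(1+r) = -(x^2) * ((1-r)/(1+r))"
    using assms by (simp add: field_simps)
  then have "exp (-(x^2)) / sqrt pi * (exp (2*x^2*r/(1+r)) / sqrt (1 - r^2)) = mehler_kernel r x"
    by (simp add: mehler_kernel_def exp_add[symmetric])
  then show ?thesis
    using sums_mult[OF mehler_diagonal_sums[OF assms], of "exp (-(x^2)) / sqrt pi" x]
    by (simp add: hermite_fun_sq mult_ac)
qed

lemma has_bochner_integral_mehler_kernel:
  assumes "0 \<le> r" "r < 1"
  shows "has_bochner_integral lborel (mehler_kernel r) (1/(1-r))"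
proof -
  define c where "c = sqrt pi * sqrt (1 - r^2)"
  have "(1-r)/(1+r) > 0" using assms by simp
  have integral_eq: "sqrt (pi / ((1-r)/(1+r))) / c = 1/(1-r)"
  proof -
    have "1 - r^2 = (1-r) * (1+r)" by (simp add: power2_eq_square algebra_simps)
    then have "sqrt (pi / ((1-r)/(1+r))) / c
        = sqrt pi * sqrt (1+r) / sqrt (1-r) / (sqrt pi * (sqrt (1-r) * sqrt (1+r)))"
      using assms by (simp add: c_def real_sqrt_mult real_sqrt_divide)
    also have "\<dots> = 1 / (sqrt (1-r) * sqrt (1-r))" using assms by (simp add: field_simps)
    finally show ?thesis using assms by simp
  qed
  have kernel: "mehler_kernel r = (\<lambda>x. exp (-((1-r)/(1+r)) * x^2) / c)"
    by (simp add: fun_eq_iff mehler_kernel_def c_def mult_ac)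
  show ?thesis
    using has_bochner_integral_divide_zero[OF has_bochner_integral_gaussian[OF \<open>(1-r)/(1+r) > 0\<close>], of c]
    unfolding kernel integral_eq .
qed

lemma integrable_hermite_fun_sq: "integrable lborel (\<lambda>x. (hermite_fun n x)^2)"
proof (rule Bochner_Integration.integrable_bound[where f="\<lambda>x. mehler_kernel (1/2) x * 2^n"])
  show "integrable lborel (\<lambda>x. mehler_kernel (1/2) x * 2^n)"
    using has_bochner_integral_mehler_kernel[of "1/2"] by (simp add: has_bochner_integral_iff)
  show "AE x in lborel. norm ((hermite_fun n x)^2) \<le> norm (mehler_kernel (1/2) x * 2^n)"
  proof (intro AE_I2)
    fix x
    have "(hermite_fun n x)^2 * (1/2)^n \<le> mehler_kernel (1/2) x"
      using hermite_fun_sq_sums[of "1/2" x] sum_le_suminf[of "\<lambda>n. (hermite_fun n x)^2 * (1/2)^n" "{n}"]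
      by (auto simp: sums_iff)
    moreover have "mehler_kernel (1/2) x \<ge> 0" by (simp add: mehler_kernel_def power2_eq_square)
    ultimately show "norm ((hermite_fun n x)^2) \<le> norm (mehler_kernel (1/2) x * 2^n)"
      by (simp add: field_simps)
  qed
qed simp

lemma powser_sums_zero_imp_zero:
  fixes a :: "nat \<Rightarrow> real"
  assumes "\<And>r. 0 < r \<Longrightarrow> r < 1 \<Longrightarrow> (\<lambda>n. a n * r^n) sums 0"
  shows "a n = 0"
proof (rule ccontr)
  assume "a n \<noteq> 0"
  define A where "A = Abs_fps a"
  define E where "E = fps_shift (subdegree A) A"
  have "A \<noteq> 0" using \<open>a n \<noteq> 0\<close> by (auto simp: A_def fps_eq_iff)
  then have "E $ 0 \<noteq> 0" by (simp add: E_def)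
  have "fps_conv_radius A \<ge> 1"
    unfolding fps_conv_radius_def A_def fps_nth_Abs_fps
    by (intro conv_radius_geI_ex') (use assms in \<open>auto simp: sums_iff\<close>)
  then have radius: "ereal (norm r) < fps_conv_radius E" if "\<bar>r\<bar> < 1" for r :: real
    using that by (intro ereal_norm_less_fps_conv_radius) (simp_all add: E_def)
  have "eval_fps E r = 0" if "0 < r" "r < 1" for r
  proof -
    have "A = E * fps_X ^ subdegree A" unfolding E_def by (simp add: fps_shift_times_fps_X_power)
    then have "eval_fps A r = eval_fps (E * fps_X ^ subdegree A) r" by simp
    also have "\<dots> = eval_fps E r * r ^ subdegree A"
      using radius[of r] that by (subst eval_fps_mult) auto
    finally have "eval_fps A r = eval_fps E r * r ^ subdegree A" .
    moreover have "eval_fps A r = 0"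
      using assms[OF that] by (simp add: eval_fps_def A_def sums_iff)
    ultimately show ?thesis using that by simp
  qed
  then have "eventually (\<lambda>r. eval_fps E r = 0) (at_right (0::real))"
    unfolding eventually_at_right[OF zero_less_one] by (intro exI[of _ 1]) auto
  then have "(eval_fps E \<longlongrightarrow> 0) (at_right 0)" by (rule tendsto_eventually)
  moreover have "(eval_fps E \<longlongrightarrow> eval_fps E 0) (at_right 0)"
    using continuous_eval_fps[of 0 E] radius[of 0] by (simp add: continuous_within continuous_at_imp_continuous_at_within)
  ultimately have "eval_fps E 0 = 0" by (intro tendsto_unique[OF trivial_limit_at_right_real]) auto
  with \<open>E $ 0 \<noteq> 0\<close> show False by (simp add: eval_fps_at_0)
qed

lemma integral_hermite_fun_sq: "(LINT x|lborel. (hermite_fun n x)^2) = 1"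
proof -
  define m where "m = (\<lambda>n. LINT x|lborel. (hermite_fun n x)^2)"
  \<comment> \<open>Integrating Mehler's formula termwise: sum_n m n r^n = 1/(1-r) = sum_n r^n.\<close>
  have "m n - 1 = 0"
  proof (rule powser_sums_zero_imp_zero)
    fix r :: real assume r: "0 < r" "r < 1"
    have "(\<lambda>n. LINT x|lborel. (1::real) * of_real ((hermite_fun n x)^2 * r^n)) sums
        (LINT x|lborel. 1 * of_real (mehler_kernel r x))"
      using r has_bochner_integral_mehler_kernel[of r]
      by (intro sums_integral_bounded_mult[where g="\<lambda>_. 1" and B=1] hermite_fun_sq_sums)
         (auto simp: has_bochner_integral_iff)
    then have "(\<lambda>n. m n * r^n) sums (1/(1-r))"
      using r has_bochner_integral_mehler_kernel[of r] by (simp add: m_def has_bochner_integral_iff)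
    from sums_diff[OF this geometric_sums[of r]] r
    show "(\<lambda>n. (m n - 1) * r^n) sums 0" by (simp add: algebra_simps)
  qed
  then show ?thesis by (simp add: m_def)
qed

lemma norm_of_real_powr: "t > 0 \<Longrightarrow> norm (complex_of_real t powr s) = t powr Re s"
  using norm_powr_real_powr[of "complex_of_real t" s] by simp

lemma set_integral_pos_reals_scale:
  fixes g :: "real \<Rightarrow> 'a::{banach, second_countable_topology}"
  assumes "a > 0"
  shows "(LINT t:{0<..}|lborel. g t) = a *\<^sub>R (LINT u:{0<..}|lborel. g (a * u))"
proof -
  have "indicator {0<..} (a * u) = (indicator {0<..} u :: real)" for u
    using assms by (simp add: indicator_def zero_less_mult_iff)
  then show ?thesis
    unfolding set_lebesgue_integral_def
    using lborel_integral_real_affine[of a "\<lambda>t. indicator {0<..} t *\<^sub>R g t" 0] assms by simp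
qed

lemma mellin_exp:
  fixes s :: complex and a :: real
  assumes "Re s > 0" and "a > 0"
  shows "set_integrable lborel {0<..} (\<lambda>t. of_real t powr (s-1) * of_real (exp (-(a*t))))"
    and "(LINT t:{0<..}|lborel. of_real t powr (s-1) * of_real (exp (-(a*t)))) = Gamma s * of_real a powr (-s)"
proof -
  define g where "g = (\<lambda>b t :: real. complex_of_real t powr (s-1) * of_real (exp (-(b*t))))"
  have g_div: "g b = (\<lambda>t. of_real t powr (s-1) / of_real (exp (b*t)))" for b
    by (auto simp: g_def fun_eq_iff exp_minus field_simps)
  have integrable: "set_integrable lborel {0<..} (g b)" if "b > 0" for b
  proof -
    have "(\<lambda>t. indicator {0<..} t *\<^sub>R g b t) \<in> borel_measurable lborel"
      unfolding g_def by measurable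
    moreover have "set_integrable lebesgue {0<..} (g b)"
      unfolding g_div by (rule absolutely_integrable_Gamma_integral[OF assms(1) that])
    ultimately show ?thesis
      unfolding set_integrable_def using integrable_completion by blast
  qed
  then show "set_integrable lborel {0<..} (\<lambda>t. of_real t powr (s-1) * of_real (exp (-(a*t))))"
    using assms(2) by (simp add: g_def)
  have "Gamma s = integral {0<..} (g 1)"
    using Gamma_integral_complex'[OF assms(1)] unfolding g_div by (simp add: integral_unique)
  also have "\<dots> = (LINT t:{0<..}|lborel. g 1 t)"
    by (rule set_borel_integral_eq_integral(2)[OF integrable, symmetric]) simp
  also have "\<dots> = a *\<^sub>R (LINT u:{0<..}|lborel. g 1 (a * u))"
    using assms(2) by (rule set_integral_pos_reals_scale)
  also have "(LINT u:{0<..}|lborel. g 1 (a * u)) = (LINT u:{0<..}|lborel. of_real a powr (s-1) * g a u)"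
    using assms(2) by (intro set_lebesgue_integral_cong) (auto simp: g_def powr_times_real)
  also have "a *\<^sub>R \<dots> = of_real a powr s * (LINT u:{0<..}|lborel. g a u)"
    using assms(2) by (simp add: set_integral_mult_right scaleR_conv_of_real powr_diff)
  finally show "(LINT t:{0<..}|lborel. of_real t powr (s-1) * of_real (exp (-(a*t)))) = Gamma s * of_real a powr (-s)"
    using assms(2) by (simp add: g_def powr_minus field_simps)
qed

lemma mellin_exp_real:
  fixes \<sigma> a :: real
  assumes "\<sigma> > 0" and "a > 0"
  shows "set_integrable lborel {0<..} (\<lambda>t. t powr (\<sigma>-1) * exp (-(a*t)))"
    and "(LINT t:{0<..}|lborel. t powr (\<sigma>-1) * exp (-(a*t))) = Gamma \<sigma> * a powr (-\<sigma>)"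
proof -
  have complex_eq: "(\<lambda>t. indicator {0<..} t *\<^sub>R (of_real t powr (of_real \<sigma> - 1) * of_real (exp (-(a*t)))))
      = (\<lambda>t. complex_of_real (indicator {0<..} t *\<^sub>R (t powr (\<sigma>-1) * exp (-(a*t)))))"
    by (auto simp: fun_eq_iff indicator_def powr_of_real[symmetric])
  show "set_integrable lborel {0<..} (\<lambda>t. t powr (\<sigma>-1) * exp (-(a*t)))"
    using mellin_exp(1)[of "of_real \<sigma>" a] assms
    unfolding set_integrable_def complex_eq complex_of_real_integrable_eq by simp
  have "complex_of_real (LINT t:{0<..}|lborel. t powr (\<sigma>-1) * exp (-(a*t)))
      = Gamma (of_real \<sigma>) * of_real a powr (- of_real \<sigma>)"
    using mellin_exp(2)[of "of_real \<sigma>" a] assms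
    unfolding set_lebesgue_integral_def complex_eq integral_complex_of_real by simp
  also have "\<dots> = of_real (Gamma \<sigma> * a powr (-\<sigma>))"
    using assms by (simp add: Gamma_complex_of_real powr_of_real[symmetric])
  finally show "(LINT t:{0<..}|lborel. t powr (\<sigma>-1) * exp (-(a*t))) = Gamma \<sigma> * a powr (-\<sigma>)"
    by (simp only: of_real_eq_iff)
qed

lemma exp_neg_odd_mult: "exp (-((2 * real n + 1) * t)) = exp (-t) * exp (-2*t) ^ n"
  by (simp add: exp_of_nat_mult[symmetric] exp_add[symmetric] algebra_simps)

lemma norm_odd_exp_term_le:
  fixes c :: "'a::real_normed_div_algebra"
  assumes "norm c \<le> B"
  shows "norm (c * of_real (exp (-((2 * real n + 1) * t)))) \<le> B * exp (-t) * exp (-2*t) ^ n"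
  using assms unfolding exp_neg_odd_mult by (simp add: norm_mult norm_power mult_right_mono)

lemma summable_odd_exp_series:
  fixes c :: "nat \<Rightarrow> 'a::real_normed_div_algebra"
  assumes "\<And>n. norm (c n) \<le> B" and "t > 0"
  shows "summable (\<lambda>n. norm (c n * of_real (exp (-((2 * real n + 1) * t)))))"
proof (rule summable_comparison_test')
  show "summable (\<lambda>n. B * exp (-t) * exp (-2*t) ^ n)"
    using assms(2) by (intro summable_mult summable_geometric) simp
  show "norm (norm (c n * of_real (exp (-((2 * real n + 1) * t))))) \<le> B * exp (-t) * exp (-2*t) ^ n" for n
    using norm_odd_exp_term_le[OF assms(1)] by simp
qed

lemma summable_odd_powr:
  assumes "\<sigma> > 1"
  shows "summable (\<lambda>n. real (2*n+1) powr (-\<sigma>))"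
proof (rule summable_comparison_test_ev)
  show "summable (\<lambda>n. real n powr (-\<sigma>))" using assms by (simp add: summable_real_powr_iff)
  show "\<forall>\<^sub>F n in sequentially. norm (real (2*n+1) powr (-\<sigma>)) \<le> real n powr (-\<sigma>)"
    using eventually_ge_at_top[of "1::nat"]
    by eventually_elim (use assms in \<open>auto intro!: powr_mono2'\<close>)
qed

lemma summable_mellin_odd_exp_norms:
  fixes c :: "nat \<Rightarrow> 'a::real_normed_vector"
  assumes "\<And>n. norm (c n) \<le> B" and "\<sigma> > 1"
  shows "summable (\<lambda>n. LINT t:{0<..}|lborel. norm (c n) * (t powr (\<sigma>-1) * exp (-((2 * real n + 1) * t))))"
proof (rule summable_comparison_test')
  show "summable (\<lambda>n. B * Gamma \<sigma> * real (2*n+1) powr (-\<sigma>))"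
    using summable_odd_powr[OF assms(2)] by (intro summable_mult)
  have "Gamma \<sigma> * real (2*n+1) powr (-\<sigma>) \<ge> 0" for n
    using assms(2) by (simp add: Gamma_real_pos less_imp_le)
  then show "norm (LINT t:{0<..}|lborel. norm (c n) * (t powr (\<sigma>-1) * exp (-((2 * real n + 1) * t))))
      \<le> B * Gamma \<sigma> * real (2*n+1) powr (-\<sigma>)" for n
    using assms mellin_exp_real(2)[of \<sigma> "2 * real n + 1"]
    by (simp add: set_integral_mult_right add.commute mult.assoc mult_right_mono)
qed

lemma mellin_odd_exp_series:
  fixes c :: "nat \<Rightarrow> complex" and s :: complex
  assumes c_le: "\<And>n. norm (c n) \<le> B" and "Re s > 1"
  defines "F \<equiv> \<lambda>t. \<Sum>n. c n * of_real (exp (-((2 * real n + 1) * t)))"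
  shows "set_integrable lborel {0<..} (\<lambda>t. of_real t powr (s-1) * F t)"
    and "(\<lambda>n. Gamma s * (of_nat (2*n+1) powr (-s) * c n))
           sums (LINT t:{0<..}|lborel. of_real t powr (s-1) * F t)"
proof -
  have "Re s > 0" using assms(2) by simp
  have odd_pos: "2 * real n + 1 > 0" for n by simp
  define G where "G n t = indicator {0<..} t *\<^sub>R
      (c n * (of_real t powr (s-1) * of_real (exp (-((2 * real n + 1) * t)))))" for n t
  have integrable_G: "integrable lborel (G n)" for n
    unfolding G_def[abs_def] set_integrable_def[symmetric]
    by (intro set_integrable_mult_right mellin_exp(1)[OF \<open>Re s > 0\<close> odd_pos])
  have integral_G: "(LINT t|lborel. G n t) = Gamma s * (of_nat (2*n+1) powr (-s) * c n)" for n
    unfolding G_def set_lebesgue_integral_def[symmetric] set_integral_mult_right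
      mellin_exp(2)[OF \<open>Re s > 0\<close> odd_pos]
    by (simp add: mult_ac add.commute)
  have norm_G: "norm (G n t) = indicator {0<..} t *\<^sub>R
      (norm (c n) * (t powr (Re s - 1) * exp (-((2 * real n + 1) * t))))" for n t
    by (cases "t > 0") (simp_all add: G_def norm_mult norm_of_real_powr)
  have summable_integrals: "summable (\<lambda>n. LINT t|lborel. norm (G n t))"
    unfolding norm_G set_lebesgue_integral_def[symmetric]
    using c_le assms(2) by (rule summable_mellin_odd_exp_norms)
  have summable_norms: "AE t in lborel. summable (\<lambda>n. norm (G n t))"
  proof (rule AE_I2)
    fix t :: real
    show "summable (\<lambda>n. norm (G n t))"
    proof (cases "t > 0")
      case True
      then show ?thesis
        using summable_mult[OF summable_odd_exp_series[OF c_le True], of "t powr (Re s - 1)"]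
        by (simp add: norm_G norm_mult mult_ac)
    qed (simp add: G_def)
  qed
  have sum_G: "(\<Sum>n. G n t) = indicator {0<..} t *\<^sub>R (of_real t powr (s-1) * F t)" for t
    using summable_norm_cancel[OF summable_odd_exp_series[OF c_le, of t]]
    by (cases "t > 0") (simp_all add: G_def F_def suminf_mult[symmetric] mult_ac)
  show "set_integrable lborel {0<..} (\<lambda>t. of_real t powr (s-1) * F t)"
    using integrable_suminf[OF integrable_G summable_norms summable_integrals]
    unfolding set_integrable_def sum_G .
  show "(\<lambda>n. Gamma s * (of_nat (2*n+1) powr (-s) * c n))
          sums (LINT t:{0<..}|lborel. of_real t powr (s-1) * F t)"
    using sums_integral[OF integrable_G summable_norms summable_integrals]
    unfolding set_lebesgue_integral_def sum_G integral_G .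
qed

lemma holomorphic_mellin_segment:
  fixes g :: "real \<Rightarrow> complex"
  assumes "continuous_on {a..b} g" and "a > 0"
  shows "(\<lambda>s. LINT t:{a..b}|lborel. of_real t powr (s-1) * g t) holomorphic_on UNIV"
proof -
  have continuous: "continuous_on {a..b} (\<lambda>t. of_real t powr (s-1) * g t)" for s
    using assms by (intro continuous_intros) (auto simp: complex_nonpos_Reals_iff)
  have "(\<lambda>s. integral (cbox a b) (\<lambda>t. of_real t powr (s-1) * g t)) holomorphic_on UNIV"
  proof (rule leibniz_rule_holomorphic[where fx="\<lambda>s t. Ln (of_real t) * of_real t powr (s-1) * g t"])
    fix s :: complex and t :: real
    assume "t \<in> cbox a b"
    then have "complex_of_real t \<noteq> 0" using assms(2) by auto
    then have "((\<lambda>x. of_real t powr x) has_field_derivative Ln (of_real t) * of_real t powr (s-1)) (at (s-1))"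
      by (rule has_field_derivative_powr_right)
    from DERIV_chain2[where g="\<lambda>x. x - 1" and x=s, OF this DERIV_diff[OF DERIV_ident DERIV_const]]
    have "((\<lambda>s. of_real t powr (s-1)) has_field_derivative Ln (of_real t) * of_real t powr (s-1)) (at s)"
      by simp
    from DERIV_mult[OF this DERIV_const[of "g t"]]
    show "((\<lambda>s. of_real t powr (s-1) * g t) has_field_derivative
        Ln (of_real t) * of_real t powr (s-1) * g t) (at s within UNIV)"
      by simp
  next
    show "continuous_on (UNIV \<times> cbox a b) (\<lambda>(s, t). Ln (of_real t) * of_real t powr (s-1) * g t)"
      unfolding case_prod_unfold using assms
      by (intro continuous_intros continuous_on_compose2[OF assms(1)]
          continuous_on_compose2[OF continuous_on_Ln[of "{z. Re z > 0}"]])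
         (auto simp: complex_nonpos_Reals_iff)
  qed (use continuous in \<open>auto intro: integrable_continuous_real\<close>)
  moreover have "(LINT t:{a..b}|lborel. of_real t powr (s-1) * g t)
      = integral (cbox a b) (\<lambda>t. of_real t powr (s-1) * g t)" for s
    using set_borel_integral_eq_integral(2)[OF borel_integrable_atLeastAtMost'[OF continuous]] by simp
  ultimately show ?thesis by simp
qed

lemma uniform_limit_mellin_tail:
  fixes g :: "real \<Rightarrow> complex"
  assumes "continuous_on {1..} g" and g_le: "\<And>t. t \<ge> 1 \<Longrightarrow> norm (g t) \<le> C * exp (-t)"
  shows "uniform_limit (cball z r) (\<lambda>b s. LINT t:{1..b}|lborel. of_real t powr (s-1) * g t)
           (\<lambda>s. LINT t:{1..}|lborel. of_real t powr (s-1) * g t) at_top"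
proof -
  define K where "K = max 0 (Re z + r)"
  define bound where "bound t = C * (t powr ((K+1)-1) * exp (-(1*t)))" for t
  have "set_integrable lborel {0<..} (\<lambda>t. t powr ((K+1)-1) * exp (-(1*t)))"
    by (rule mellin_exp_real(1)) (auto simp: K_def)
  then have "set_integrable lborel {1..} bound"
    unfolding bound_def by (intro set_integrable_mult_right) (auto elim: set_integrable_subset)
  show ?thesis
  proof (rule uniform_limit_set_lebesgue_integral_at_top[where g=bound])
    fix s :: complex and t :: real
    assume "s \<in> cball z r" and "1 \<le> t"
    then have "Re s - 1 \<le> K"
      using abs_Re_le_cmod[of "s - z"] by (auto simp: K_def dist_norm norm_minus_commute)
    then have "t powr (Re s - 1) \<le> t powr K" using \<open>1 \<le> t\<close> by (intro powr_mono) auto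
    then have "t powr (Re s - 1) * norm (g t) \<le> t powr K * (C * exp (-t))"
      using g_le[OF \<open>1 \<le> t\<close>] by (intro mult_mono) auto
    then show "norm (of_real t powr (s-1) * g t) \<le> bound t"
      using \<open>1 \<le> t\<close> by (simp add: bound_def norm_mult norm_of_real_powr mult_ac)
  next
    show "set_borel_measurable lborel {1..} (\<lambda>t. of_real t powr (s-1) * g t)" for s
      unfolding set_borel_measurable_def measurable_lborel2 using assms(1)
      by (intro borel_measurable_continuous_on_indicator continuous_intros)
         (auto simp: complex_nonpos_Reals_iff)
  qed (use \<open>set_integrable lborel {1..} bound\<close> in auto)
qed

lemma holomorphic_mellin_tail:
  fixes g :: "real \<Rightarrow> complex"
  assumes "continuous_on {1..} g" and "\<And>t. t \<ge> 1 \<Longrightarrow> norm (g t) \<le> C * exp (-t)"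
  shows "(\<lambda>s. LINT t:{1..}|lborel. of_real t powr (s-1) * g t) holomorphic_on UNIV"
proof -
  have "\<forall>\<^sub>F b in at_top.
      continuous_on (cball z 1) (\<lambda>s. LINT t:{1..b}|lborel. of_real t powr (s-1) * g t) \<and>
      (\<lambda>s. LINT t:{1..b}|lborel. of_real t powr (s-1) * g t) holomorphic_on ball z 1" for z
    using eventually_ge_at_top[of "1::real"]
  proof eventually_elim
    case (elim b)
    have "continuous_on {1..b} g" using assms(1) by (rule continuous_on_subset) auto
    from holomorphic_mellin_segment[OF this] show ?case
      by (meson holomorphic_on_imp_continuous_on holomorphic_on_subset subset_UNIV zero_less_one)
  qed
  then have "(\<lambda>s. LINT t:{1..}|lborel. of_real t powr (s-1) * g t) holomorphic_on ball z 1" for z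
    using holomorphic_uniform_limit[OF _ uniform_limit_mellin_tail[OF assms]] by auto
  then show ?thesis
    by (meson UNIV_I centre_in_ball holomorphic_on_imp_differentiable_at open_ball zero_less_one
        field_differentiable_at_within holomorphic_on_def)
qed

lemma cosh_div_sinh_eq:
  assumes "t > (0::real)"
  shows "cosh t / sinh t = (1 + exp (-2*t)) / (1 - exp (-2*t))"
  using assms by (simp add: cosh_def sinh_def exp_minus field_simps exp_add[symmetric] flip: exp_diff)

lemma exp_sqrt_coth_eq:
  assumes "t > (0::real)"
  shows "exp (-t) * sqrt (cosh t / sinh t) / sqrt (1 - exp (-2*t)^2) = 1 / (2 * sinh t)"
proof -
  define E where "E = exp t"
  have "E > 0" by (simp add: E_def)
  have E_eqs: "exp (-t) = 1/E" "exp (-2*t) = 1/E^2" "sinh t = (E - 1/E)/2" "cosh t = (E + 1/E)/2"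
    by (simp_all add: E_def sinh_def cosh_def exp_minus inverse_eq_divide power2_eq_square flip: exp_add)
  have factor: "1 - exp (-2*t)^2 = (2 * exp (-t))^2 * (sinh t * cosh t)"
    unfolding E_eqs using \<open>E > 0\<close> by (simp add: field_simps power2_eq_square)
  moreover have "sinh t > 0" "cosh t > 0" using assms by auto
  ultimately show ?thesis
    unfolding factor by (simp add: real_sqrt_mult real_sqrt_divide field_simps)
qed

lemma mehler_kernel_coth_scaled:
  assumes "t > 0"
  shows "mehler_kernel (exp (-2*t)) (sqrt (cosh t / sinh t) * y)
           = exp (-(y^2)) / (sqrt pi * sqrt (1 - exp (-2*t)^2))"
proof -
  define r where "r = exp (-2*t)"
  have "0 < r" "r < 1" using assms by (auto simp: r_def)
  have "(sqrt (cosh t / sinh t))^2 = (1 + r) / (1 - r)"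
    using cosh_div_sinh_eq[OF assms] assms by (simp add: r_def)
  then have "(sqrt (cosh t / sinh t) * y)^2 * ((1-r)/(1+r)) = y^2"
    using \<open>0 < r\<close> \<open>r < 1\<close> by (simp add: power_mult_distrib)
  then show ?thesis unfolding mehler_kernel_def r_def[symmetric] by simp
qed

lemma exp_mult_integral_mehler_kernel:
  fixes g :: "real \<Rightarrow> complex"
  assumes "t > 0"
  shows "of_real (exp (-t)) * (LINT x|lborel. g x * of_real (mehler_kernel (exp (-2*t)) x))
     = of_real (1 / (2 * sqrt pi)) * of_real (1 / sinh t) *
       (LINT x|lborel. g (x * sqrt (cosh t / sinh t)) * of_real (exp (-(x^2))))"
proof -
  define \<kappa> where "\<kappa> = sqrt (cosh t / sinh t)"
  define c where "c = 1 / (sqrt pi * sqrt (1 - exp (-2*t)^2))"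
  have "\<kappa> > 0" using assms by (simp add: \<kappa>_def)
  have "(\<lambda>y. g (0 + \<kappa> * y) * of_real (mehler_kernel (exp (-2*t)) (0 + \<kappa> * y)))
      = (\<lambda>y. g (y * \<kappa>) * of_real (exp (-(y^2))) * of_real c)"
    using mehler_kernel_coth_scaled[OF assms] by (simp add: \<kappa>_def c_def mult_ac)
  then have "(LINT x|lborel. g x * of_real (mehler_kernel (exp (-2*t)) x))
      = of_real \<kappa> * ((LINT y|lborel. g (y * \<kappa>) * of_real (exp (-(y^2)))) * of_real c)"
    using lborel_integral_real_affine[of \<kappa> "\<lambda>x. g x * of_real (mehler_kernel (exp (-2*t)) x)" 0] \<open>\<kappa> > 0\<close>
    by (simp only: integral_mult_left_zero scaleR_conv_of_real abs_of_pos)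
  then have "of_real (exp (-t)) * (LINT x|lborel. g x * of_real (mehler_kernel (exp (-2*t)) x))
      = of_real (exp (-t) * \<kappa> / sqrt (1 - exp (-2*t)^2) / sqrt pi)
        * (LINT y|lborel. g (y * \<kappa>) * of_real (exp (-(y^2))))"
    by (simp add: c_def field_simps)
  also have "exp (-t) * \<kappa> / sqrt (1 - exp (-2*t)^2) = 1 / (2 * sinh t)"
    unfolding \<kappa>_def by (rule exp_sqrt_coth_eq[OF assms])
  finally show ?thesis unfolding \<kappa>_def by simp
qed

definition hermite_coeff :: "(real \<Rightarrow> complex) \<Rightarrow> nat \<Rightarrow> complex" where
  "hermite_coeff f n = (LINT x|lborel. f x * complex_of_real ((hermite_fun n x)^2))"

(* Tr(f e^(-tH)) = sum_n hermite_coeff f n * e^(-(2n+1)t), written as a power series in e^(-2t)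
  so that its continuity in t is that of eval_fps. *)
definition heat_trace :: "(real \<Rightarrow> complex) \<Rightarrow> real \<Rightarrow> complex" where
  "heat_trace f t = of_real (exp (-t)) * eval_fps (Abs_fps (hermite_coeff f)) (of_real (exp (-2*t)))"

context
  fixes f :: "real \<Rightarrow> complex" and B :: real
  assumes f_measurable [measurable]: "f \<in> borel_measurable borel" and f_le: "\<And>x. norm (f x) \<le> B"
begin

lemma norm_hermite_coeff_le: "norm (hermite_coeff f n) \<le> B"
proof -
  have norm_eq: "norm (f x * complex_of_real ((hermite_fun n x)^2)) = norm (f x) * (hermite_fun n x)^2" for x
    by (simp only: norm_mult norm_of_real) simp
  have norm_le: "norm (f x) * (hermite_fun n x)^2 \<le> B * (hermite_fun n x)^2" for x
    using f_le by (rule mult_right_mono) simp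
  have "integrable lborel (\<lambda>x. f x * complex_of_real ((hermite_fun n x)^2))"
  proof (rule Bochner_Integration.integrable_bound[where f="\<lambda>x. B * (hermite_fun n x)^2"])
    show "AE x in lborel. norm (f x * complex_of_real ((hermite_fun n x)^2)) \<le> norm (B * (hermite_fun n x)^2)"
      unfolding norm_eq using norm_le by (intro AE_I2) (metis abs_ge_self order_trans real_norm_def)
  qed (use integrable_hermite_fun_sq in simp_all)
  then have "integrable lborel (\<lambda>x. norm (f x) * (hermite_fun n x)^2)"
    unfolding norm_eq[symmetric] by (rule integrable_norm)
  have "norm (hermite_coeff f n) \<le> (LINT x|lborel. norm (f x) * (hermite_fun n x)^2)"
    unfolding hermite_coeff_def norm_eq[symmetric] by (rule integral_norm_bound)
  also have "\<dots> \<le> (LINT x|lborel. B * (hermite_fun n x)^2)"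
    using integrable_hermite_fun_sq[of n] norm_le \<open>integrable lborel (\<lambda>x. norm (f x) * _)\<close>
    by (intro integral_mono) simp_all
  also have "\<dots> = B" by (simp add: integral_hermite_fun_sq)
  finally show ?thesis .
qed

lemma sums_heat_kernel_integral:
  assumes "t > 0"
  shows "(\<lambda>n. hermite_coeff f n * of_real (exp (-((2 * real n + 1) * t)))) sums
     (of_real (1 / (2 * sqrt pi)) * of_real (1 / sinh t) *
      (LINT x|lborel. f (x * sqrt (cosh t / sinh t)) * of_real (exp (-(x^2)))))"
proof -
  let ?r = "exp (-2*t)"
  have "0 < ?r" "?r < 1" using assms by auto
  have "(\<lambda>n. LINT x|lborel. f x * of_real ((hermite_fun n x)^2 * ?r^n))
      sums (LINT x|lborel. f x * of_real (mehler_kernel ?r x))"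
    using \<open>0 < ?r\<close> \<open>?r < 1\<close> has_bochner_integral_mehler_kernel[of ?r] f_le
    by (intro sums_integral_bounded_mult hermite_fun_sq_sums) (auto simp: has_bochner_integral_iff)
  moreover have "(LINT x|lborel. f x * of_real ((hermite_fun n x)^2 * ?r^n)) = hermite_coeff f n * of_real (?r^n)" for n
    unfolding hermite_coeff_def of_real_mult mult.assoc[symmetric] by (rule integral_mult_left_zero)
  ultimately have scaled: "(\<lambda>n. of_real (exp (-t)) * (hermite_coeff f n * of_real (?r^n)))
      sums (of_real (exp (-t)) * (LINT x|lborel. f x * of_real (mehler_kernel ?r x)))"
    by (intro sums_mult) simp
  have term_eq: "of_real (exp (-t)) * (hermite_coeff f n * of_real (?r^n))
      = hermite_coeff f n * of_real (exp (-((2 * real n + 1) * t)))" for n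
    unfolding exp_neg_odd_mult by (simp add: mult_ac)
  show ?thesis
    using scaled unfolding term_eq exp_mult_integral_mehler_kernel[OF assms] .
qed

lemma fps_conv_radius_hermite_coeff: "fps_conv_radius (Abs_fps (hermite_coeff f)) \<ge> 1"
  unfolding fps_conv_radius_def fps_nth_Abs_fps
proof (intro conv_radius_geI_ex')
  fix r :: real
  assume "0 < r" "ereal r < 1"
  then have "summable (\<lambda>n. B * r^n)" by (intro summable_mult summable_geometric) simp
  then show "summable (\<lambda>n. hermite_coeff f n * of_real r ^ n)"
    using \<open>0 < r\<close> norm_hermite_coeff_le
    by (elim summable_comparison_test') (simp add: norm_mult norm_power mult_right_mono)
qed

lemma heat_trace_sums:
  assumes "t > 0"
  shows "(\<lambda>n. hermite_coeff f n * of_real (exp (-((2 * real n + 1) * t)))) sums heat_trace f t"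
proof -
  have "norm (complex_of_real (exp (-2*t))) < 1" using assms by simp
  from sums_eval_fps[OF ereal_norm_less_fps_conv_radius[OF fps_conv_radius_hermite_coeff this]]
  have "(\<lambda>n. hermite_coeff f n * of_real (exp (-2*t)) ^ n) sums
      eval_fps (Abs_fps (hermite_coeff f)) (of_real (exp (-2*t)))"
    by simp
  from sums_mult[OF this, of "of_real (exp (-t))"] show ?thesis
    unfolding heat_trace_def exp_neg_odd_mult by (simp add: mult_ac)
qed

lemma heat_trace_eq_kernel_integral:
  assumes "t > 0"
  shows "heat_trace f t = of_real (1 / (2 * sqrt pi)) * of_real (1 / sinh t) *
      (LINT x|lborel. f (x * sqrt (cosh t / sinh t)) * of_real (exp (-(x^2))))"
  using sums_unique2[OF heat_trace_sums[OF assms] sums_heat_kernel_integral[OF assms]] .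

lemma continuous_on_heat_trace: "continuous_on {0<..} (heat_trace f)"
proof -
  have "(\<lambda>t. complex_of_real (exp (-2*t))) ` {0<..} \<subseteq> eball 0 (fps_conv_radius (Abs_fps (hermite_coeff f)))"
  proof (rule image_subsetI)
    fix t :: real
    assume "t \<in> {0<..}"
    then have "norm (complex_of_real (exp (-2*t))) < 1" by simp
    from ereal_norm_less_fps_conv_radius[OF fps_conv_radius_hermite_coeff this]
    show "complex_of_real (exp (-2*t)) \<in> eball 0 (fps_conv_radius (Abs_fps (hermite_coeff f)))"
      by simp
  qed
  then show ?thesis unfolding heat_trace_def[abs_def] by (auto intro!: continuous_intros)
qed

lemma norm_heat_trace_le:
  assumes "t \<ge> 1"
  shows "norm (heat_trace f t) \<le> 2 * B * exp (-t)"
proof -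
  have "B \<ge> 0" using f_le norm_ge_zero order_trans by blast
  have "t > 0" using assms by simp
  have "exp (2*t) \<ge> 2" using exp_ge_add_one_self[of "2*t"] assms by linarith
  then have "1 - exp (-2*t) \<ge> 1/2" by (simp add: exp_minus field_simps)
  have geometric: "(\<lambda>n. B * exp (-t) * exp (-2*t) ^ n) sums (B * exp (-t) / (1 - exp (-2*t)))"
    using assms sums_mult[OF geometric_sums[of "exp (-2*t)"], of "B * exp (-t)"] by simp
  have "norm (heat_trace f t) = norm (\<Sum>n. hermite_coeff f n * of_real (exp (-((2 * real n + 1) * t))))"
    using heat_trace_sums[OF \<open>t > 0\<close>] by (simp add: sums_iff)
  also have "\<dots> \<le> (\<Sum>n. B * exp (-t) * exp (-2*t) ^ n)"
    using geometric norm_odd_exp_term_le[OF norm_hermite_coeff_le]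
    by (intro norm_suminf_le) (auto simp: sums_iff)
  also have "\<dots> = B * exp (-t) / (1 - exp (-2*t))" using geometric by (simp add: sums_iff)
  also have "\<dots> \<le> B * exp (-t) / (1/2)"
    using \<open>1 - exp (-2*t) \<ge> 1/2\<close> \<open>B \<ge> 0\<close> \<open>t > 0\<close> by (intro divide_left_mono) auto
  finally show ?thesis by simp
qed

lemma Gamma_osc_trace_eq_mellin:
  assumes "Re s > 1"
  shows "set_integrable lborel {0<..} (\<lambda>t. of_real t powr (s-1) * heat_trace f t)"
    and "Gamma s * osc_trace f s = (LINT t:{0<..}|lborel. of_real t powr (s-1) * heat_trace f t)"
proof -
  define F where "F = (\<lambda>t. \<Sum>n. hermite_coeff f n * of_real (exp (-((2 * real n + 1) * t))))"
  have F_eq: "of_real t powr (s-1) * F t = of_real t powr (s-1) * heat_trace f t" if "t \<in> {0<..}" for t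
    using heat_trace_sums[of t] that by (simp add: F_def sums_iff)
  have mellin: "set_integrable lborel {0<..} (\<lambda>t. of_real t powr (s-1) * F t)"
    "(\<lambda>n. Gamma s * (of_nat (2*n+1) powr (-s) * hermite_coeff f n))
       sums (LINT t:{0<..}|lborel. of_real t powr (s-1) * F t)"
    unfolding F_def by (rule mellin_odd_exp_series[OF norm_hermite_coeff_le assms])+
  have "set_integrable lborel {0<..} (\<lambda>t. of_real t powr (s-1) * F t)
      = set_integrable lborel {0<..} (\<lambda>t. of_real t powr (s-1) * heat_trace f t)"
    using F_eq by (intro set_integrable_cong) simp_all
  with mellin(1) show "set_integrable lborel {0<..} (\<lambda>t. of_real t powr (s-1) * heat_trace f t)"
    by simp
  have "Gamma s \<noteq> 0" using assms by (intro Gamma_nonzero) (auto elim!: nonpos_Ints_cases)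
  with mellin(2) have "summable (\<lambda>n. of_nat (2*n+1) powr (-s) * hermite_coeff f n)"
    by (simp add: sums_iff)
  then have "Gamma s * osc_trace f s = (\<Sum>n. Gamma s * (of_nat (2*n+1) powr (-s) * hermite_coeff f n))"
    unfolding osc_trace_def hermite_coeff_def[symmetric] by (simp add: suminf_mult)
  also have "\<dots> = (LINT t:{0<..}|lborel. of_real t powr (s-1) * F t)"
    using mellin(2) by (simp add: sums_iff)
  also have "\<dots> = (LINT t:{0<..}|lborel. of_real t powr (s-1) * heat_trace f t)"
    using F_eq by (intro set_lebesgue_integral_cong) auto
  finally show "Gamma s * osc_trace f s = (LINT t:{0<..}|lborel. of_real t powr (s-1) * heat_trace f t)" .
qed

lemma set_integral_heat_trace_unit_interval:
  "(LINT t:{0<..<1}|lborel. of_real t powr (s-1) * heat_trace f t) =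
     complex_of_real (1 / (2 * sqrt pi)) *
       (LBINT t=0..1. (LINT x|lborel.
          (complex_of_real t) powr (s - 1) * complex_of_real (1 / sinh t)
          * f (x * sqrt (cosh t / sinh t)) * complex_of_real (exp (- (x^2)))))"
proof -
  define K where "K t = (LINT x|lborel.
      (complex_of_real t) powr (s - 1) * complex_of_real (1 / sinh t)
      * f (x * sqrt (cosh t / sinh t)) * complex_of_real (exp (- (x^2))))" for t
  have "einterval 0 1 = {0<..<(1::real)}" by (auto simp: einterval_def)
  then have unit_interval: "(LINT t:{0<..<1}|lborel. K t) = (LBINT t=0..1. K t)"
    by (simp add: interval_lebesgue_integral_def)
  have "\<forall>t. t \<in> {0<..<1} \<longrightarrow> of_real t powr (s-1) * heat_trace f t = of_real (1 / (2 * sqrt pi)) * K t"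
    using heat_trace_eq_kernel_integral by (auto simp: K_def mult.assoc integral_mult_right_zero)
  then have "(LINT t:{0<..<1}|lborel. of_real t powr (s-1) * heat_trace f t)
      = (LINT t:{0<..<1}|lborel. of_real (1 / (2 * sqrt pi)) * K t)"
    by (intro set_lebesgue_integral_cong) simp_all
  also have "\<dots> = of_real (1 / (2 * sqrt pi)) * (LINT t:{0<..<1}|lborel. K t)"
    by (rule set_integral_mult_right)
  also have "\<dots> = of_real (1 / (2 * sqrt pi)) * (LBINT t=0..1. K t)"
    by (simp only: unit_interval)
  finally show ?thesis unfolding K_def .
qed

lemma Gamma_osc_trace_eq_split:
  assumes "Re s > 1"
  shows "Gamma s * osc_trace f s =
    (LINT t:{0<..<1}|lborel. of_real t powr (s-1) * heat_trace f t)
    + (LINT t:{1..}|lborel. of_real t powr (s-1) * heat_trace f t)"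
proof -
  note mellin = Gamma_osc_trace_eq_mellin[OF assms]
  have split: "{0<..} = {0<..<1} \<union> {1::real..}" by auto
  have "Gamma s * osc_trace f s
      = (LINT t:{0<..<1} \<union> {1..}|lborel. of_real t powr (s-1) * heat_trace f t)"
    using mellin(2) unfolding split .
  also have "\<dots> = (LINT t:{0<..<1}|lborel. of_real t powr (s-1) * heat_trace f t)
      + (LINT t:{1..}|lborel. of_real t powr (s-1) * heat_trace f t)"
    using mellin(1) by (intro set_integral_Un) (auto elim: set_integrable_subset)
  finally show ?thesis .
qed

end

theorem mainTheorem4:
  fixes f :: "real \<Rightarrow> complex"
  assumes "bounded (range f)" and "uniformly_continuous_on UNIV f"
  shows "\<exists>\<rho>. \<rho> holomorphic_on UNIV \<and>
    (\<forall>s::complex. Re s > 1 \<longrightarrow>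
       Gamma s * osc_trace f s =
         complex_of_real (1 / (2 * sqrt pi)) *
           (LBINT t=0..1. (LINT x|lborel.
              (complex_of_real t) powr (s - 1) * complex_of_real (1 / sinh t)
              * f (x * sqrt (cosh t / sinh t)) * complex_of_real (exp (- (x^2)))))
         + \<rho> s)"
proof -
  obtain B where f_le: "\<And>x. norm (f x) \<le> B" using assms(1) by (auto simp: bounded_iff)
  have f_measurable: "f \<in> borel_measurable borel"
    using uniformly_continuous_imp_continuous[OF assms(2)] by (rule borel_measurable_continuous_onI)
  define \<rho> where "\<rho> s = (LINT t:{1..}|lborel. of_real t powr (s-1) * heat_trace f t)" for s
  have "\<rho> holomorphic_on UNIV"
    unfolding \<rho>_def
    using continuous_on_heat_trace[OF f_measurable f_le] norm_heat_trace_le[OF f_measurable f_le]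
    by (intro holomorphic_mellin_tail) (auto elim: continuous_on_subset)
  then show ?thesis
    using Gamma_osc_trace_eq_split[OF f_measurable f_le]
    by (intro exI[of _ \<rho>])
       (simp add: \<rho>_def set_integral_heat_trace_unit_interval[OF f_measurable f_le])
qed

end
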